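(* For every $x\in\mathbb{C}$ and every $p\in\mathbb{N}$ we have in $\mathcal{A}_0$ $$(a+xb)^p=\sum_{j=0}^p\gamma_j(x)\binom{p}{j}b^ja^{p-j},$$ where $\gamma_0(x)=1$ and $\gamma_j(x):=x(x+1)\cdots(x+j-1)$ for $j\ge1$.
   Context: $\mathcal{A}_0$ is the $\mathbb{C}$-algebra of polynomials in two variables $a,b$ subject to the commutation relation $ab-ba=b^2$. *)

theory Defs
  imports Complex_Main
begin

text \<open>A (unital, associative) C-algebra structure on a ring 'a is given by a
ring homomorphism sc from the complex numbers into the centre of 'a.
The algebra A0 = C<a,b>/(ab - ba - b^2) is the universal C-algebra generated by
two elements a, b with ab - ba = b^2, so an identity holds in A0 iff it holds
for every pair a, b satisfying this relation in every C-algebra.\<close>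

definition complex_scalars :: "(complex \<Rightarrow> 'a::ring_1) \<Rightarrow> bool" where
  "complex_scalars sc \<longleftrightarrow>
     sc 1 = 1 \<and>
     (\<forall>x y. sc (x + y) = sc x + sc y) \<and>
     (\<forall>x y. sc (x * y) = sc x * sc y) \<and>
     (\<forall>x z. sc x * z = z * sc x)"

end

theory Submission
  imports Defs
begin

text \<open>The relation gives \<open>a b^j = b^j a + j b^(j+1)\<close>, so left multiplication by
  \<open>a + x b\<close> sends the normal-ordered monomial \<open>b^j a^m\<close> to
  \<open>b^j a^(m+1) + (x + j) b^(j+1) a^m\<close>. Hence the coefficients of \<open>(a + x b)^p\<close> obey
  a Pascal recurrence twisted by the factor \<open>x + j\<close>, which is exactly the one satisfied
  by \<open>\<gamma>\<^sub>j(x) binom(p, j)\<close> because \<open>\<gamma>\<^sub>j\<^sub>+\<^sub>1(x) = \<gamma>\<^sub>j(x) (x + j)\<close>.\<close>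

lemma complex_scalars_hom:
  assumes "complex_scalars sc"
  shows "sc 1 = 1" "sc (x + y) = sc x + sc y" "sc (x * y) = sc x * sc y"
  using assms unfolding complex_scalars_def by blast+

lemma complex_scalars_central:
  assumes "complex_scalars sc"
  shows "sc x * z = z * sc x"
  using assms unfolding complex_scalars_def by blast

lemma complex_scalars_0:
  assumes "complex_scalars sc"
  shows "sc 0 = 0"
  using complex_scalars_hom(2)[OF assms, of 0 0] by simp

lemma complex_scalars_of_nat:
  assumes "complex_scalars sc"
  shows "sc (of_nat n) = of_nat n"
  by (induction n) (simp_all add: complex_scalars_0[OF assms] complex_scalars_hom[OF assms])

lemma mult_power_of_commutator_eq_square:
  fixes a b :: "'a::ring_1"
  assumes "a * b - b * a = b ^ 2"
  shows "a * b ^ j = b ^ j * a + of_nat j * b ^ Suc j"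
proof (induction j)
  case 0
  show ?case by simp
next
  case (Suc j)
  have ab: "a * b = b * a + b ^ 2"
    using assms by (simp add: algebra_simps)
  have "a * b ^ Suc j = (a * b ^ j) * b"
    by (simp only: power_Suc2 mult.assoc)
  also have "\<dots> = (b ^ j * a + of_nat j * b ^ Suc j) * b"
    by (simp only: Suc.IH)
  also have "\<dots> = b ^ j * (a * b) + of_nat j * b ^ Suc (Suc j)"
    by (simp only: distrib_right mult.assoc power_Suc2[symmetric])
  also have "b ^ j * (a * b) = b ^ Suc j * a + b ^ Suc (Suc j)"
    by (simp only: ab power2_eq_square distrib_left mult.assoc[symmetric] power_Suc2[symmetric])
  also have "b ^ Suc j * a + b ^ Suc (Suc j) + of_nat j * b ^ Suc (Suc j) =
      b ^ Suc j * a + of_nat (Suc j) * b ^ Suc (Suc j)"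
    by (simp add: of_nat_Suc algebra_simps)
  finally show ?case .
qed

lemma left_mult_normal_monomial:
  fixes a b y :: "'a::ring_1"
  assumes "a * b - b * a = b ^ 2"
  shows "(a + y * b) * (b ^ j * a ^ m) =
    b ^ j * a ^ Suc m + (of_nat j + y) * (b ^ Suc j * a ^ m)"
proof -
  have "(a + y * b) * (b ^ j * a ^ m) = (a * b ^ j) * a ^ m + y * (b ^ Suc j * a ^ m)"
    by (simp add: distrib_right mult.assoc)
  also have "\<dots> = b ^ j * a ^ Suc m + (of_nat j + y) * (b ^ Suc j * a ^ m)"
    by (simp add: mult_power_of_commutator_eq_square[OF assms] algebra_simps)
  finally show ?thesis .
qed

lemma pochhammer_binomial_Suc_Suc:
  fixes x :: "'a::comm_semiring_1"
  shows "pochhammer x (Suc j) * of_nat (Suc p choose Suc j) =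
    pochhammer x (Suc j) * of_nat (p choose Suc j) + pochhammer x j * of_nat (p choose j) * (x + of_nat j)"
  by (simp add: pochhammer_Suc algebra_simps)

lemma sum_atLeast0_atMost_shift_last_zero:
  fixes f :: "nat \<Rightarrow> 'a::comm_monoid_add"
  assumes "f (Suc p) = 0"
  shows "(\<Sum>j=0..p. f j) = f 0 + (\<Sum>j=0..p. f (Suc j))"
proof -
  have "(\<Sum>j=0..p. f j) = (\<Sum>j=0..Suc p. f j)"
    using assms by simp
  then show ?thesis
    by (simp only: sum.atLeast0_atMost_Suc_shift comp_def)
qed

lemma power_add_scalar_mult_normal_ordered:
  fixes a b :: "'a::ring_1"
  assumes sc: "complex_scalars sc" and rel: "a * b - b * a = b ^ 2"
  shows "(a + sc x * b) ^ p =
    (\<Sum>j=0..p. sc (pochhammer x j * of_nat (p choose j)) * (b ^ j * a ^ (p - j)))"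
proof (induction p)
  case 0
  show ?case by (simp add: complex_scalars_hom[OF sc])
next
  case (Suc p)
  define c where "c j = pochhammer x j * of_nat (p choose j)" for j
  define c' where "c' j = pochhammer x j * of_nat (Suc p choose j)" for j
  define M where "M j = b ^ j * a ^ (Suc p - j)" for j
  define f where "f j = sc (c j) * M j" for j
  define g where "g j = sc (c j * (x + of_nat j)) * M (Suc j)" for j
  have scalar_left: "(a + sc x * b) * (sc z * m) = sc z * ((a + sc x * b) * m)" for z m
    by (metis mult.assoc complex_scalars_central[OF sc])
  have "(a + sc x * b) ^ Suc p = (\<Sum>j=0..p. sc (c j) * ((a + sc x * b) * (b ^ j * a ^ (p - j))))"
    by (simp only: power_Suc Suc.IH c_def sum_distrib_left scalar_left)
  also have "\<dots> = (\<Sum>j=0..p. f j + g j)"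
  proof (rule sum.cong[OF refl])
    fix j
    assume "j \<in> {0..p}"
    then have "Suc (p - j) = Suc p - j"
      by simp
    then have "(a + sc x * b) * (b ^ j * a ^ (p - j)) =
        M j + (of_nat j + sc x) * (b ^ Suc j * a ^ (p - j))"
      by (simp only: left_mult_normal_monomial[OF rel] M_def)
    moreover have "sc (c j * (x + of_nat j)) * N = sc (c j) * ((of_nat j + sc x) * N)" for N
      by (simp add: complex_scalars_hom[OF sc] complex_scalars_of_nat[OF sc] add.commute mult.assoc)
    ultimately show "sc (c j) * ((a + sc x * b) * (b ^ j * a ^ (p - j))) = f j + g j"
      by (simp only: f_def g_def M_def diff_Suc_Suc distrib_left)
  qed
  also have "\<dots> = f 0 + (\<Sum>j=0..p. f (Suc j) + g j)"
  proof -
    have "f (Suc p) = 0"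
      by (simp add: f_def c_def binomial_eq_0 complex_scalars_0[OF sc])
    then show ?thesis
      by (simp only: sum.distrib sum_atLeast0_atMost_shift_last_zero add.assoc)
  qed
  also have "\<dots> = (\<Sum>j=0..Suc p. sc (c' j) * M j)"
  proof -
    have "f (Suc j) + g j = sc (c' (Suc j)) * M (Suc j)" for j
      by (simp only: f_def g_def c_def c'_def pochhammer_binomial_Suc_Suc
          complex_scalars_hom(2)[OF sc] distrib_right)
    moreover have "f 0 = sc (c' 0) * M 0"
      by (simp add: f_def c_def c'_def)
    ultimately show ?thesis
      by (simp only: sum.atLeast0_atMost_Suc_shift comp_def)
  qed
  finally show ?case
    by (simp only: c'_def M_def)
qed

theorem corollary1p1p2:
  fixes sc :: "complex \<Rightarrow> 'a::ring_1" and a b :: 'a and x :: complex and p :: nat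
  assumes "complex_scalars sc"
    and "a * b - b * a = b ^ 2"
  shows "(a + sc x * b) ^ p =
         (\<Sum>j=0..p. sc (pochhammer x j) * of_nat (p choose j) * b ^ j * a ^ (p - j))"
  unfolding power_add_scalar_mult_normal_ordered[OF assms]
  by (simp add: complex_scalars_hom[OF assms(1)] complex_scalars_of_nat[OF assms(1)] mult.assoc)

end
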